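(* Let $\mathcal{A}$ and $\mathcal{B}$ be equality languages, $c\in\mathbb{Z}_+$ and $k\in\mathbb{N}$. If $\neq_{c+1}\notin\langle\mathcal{A}\cup\mathcal{B}\rangle_{\leq k}$, then every satisfiable instance of $\mathrm{CSP}_{\le k}(\mathcal{A},\mathcal{B})$ has a solution whose range is contained in $[c]=\{1,\dots,c\}$.
   Context: An equality language is a structure with domain $\mathbb{N}$ and finite signature whose relations are first-order definable in $(\mathbb{N};=)$. $\neq_r=\{(t_1,\dots,t_r)\in\mathbb{N}^r:|\{t_1,\dots,t_r\}|=r\}$. $\langle\mathcal{A}\cup\mathcal{B}\rangle_{\leq k}$ is the set of relations pp-definable over $\mathcal{A}\cup\mathcal{B}$ (formulas $\exists\bar y\,\bigwedge_i R_i(\mathbf{x}_i)$ with $R_i$ relations of $\mathcal{A}\cup\mathcal{B}$ or equality) using at most $k$ atoms with relations from $\mathcal{B}$. $\mathrm{CSP}_{\le k}(\mathcal{A},\mathcal{B})$: given an instance $(V,C_1\cup C_2)$ with $C_1$ over $\mathcal{A}$, $C_2$ over $\mathcal{B}$, $|C_2|\le k$, decide satisfiability. *)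

theory Defs
  imports Main
begin

datatype fo = FEq nat nat | FNeg fo | FConj fo fo | FDisj fo fo | FEx nat fo

fun fo_sat :: "fo \<Rightarrow> (nat \<Rightarrow> nat) \<Rightarrow> bool" where
  "fo_sat (FEq i j) s = (s i = s j)"
| "fo_sat (FNeg f) s = (\<not> fo_sat f s)"
| "fo_sat (FConj f g) s = (fo_sat f s \<and> fo_sat g s)"
| "fo_sat (FDisj f g) s = (fo_sat f s \<or> fo_sat g s)"
| "fo_sat (FEx x f) s = (\<exists>a. fo_sat f (s(x := a)))"

fun fo_fv :: "fo \<Rightarrow> nat set" where
  "fo_fv (FEq i j) = {i, j}"
| "fo_fv (FNeg f) = fo_fv f"
| "fo_fv (FConj f g) = fo_fv f \<union> fo_fv g"
| "fo_fv (FDisj f g) = fo_fv f \<union> fo_fv g"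
| "fo_fv (FEx x f) = fo_fv f - {x}"

text \<open>A relation on nat of arity n is represented by its arity together with a set of
  tuples (lists of length n).\<close>

type_synonym relation = "nat \<times> nat list set"

definition fo_definable :: "relation \<Rightarrow> bool" where
  "fo_definable R \<longleftrightarrow> (\<exists>\<phi>. fo_fv \<phi> \<subseteq> {..<fst R} \<and>
      snd R = {t. length t = fst R \<and> fo_sat \<phi> (\<lambda>i. t ! i)})"

text \<open>An equality language: a structure with domain nat and a finite signature
  (the list of its relations, indexed by relation symbols 0..length-1) whose relations
  are all first-order definable in (nat; =).\<close>

definition equality_language :: "relation list \<Rightarrow> bool" where
  "equality_language L \<longleftrightarrow> (\<forall>R\<in>set L. fo_definable R)"

definition neq_rel :: "nat \<Rightarrow> relation" where
  "neq_rel r = (r, {t. length t = r \<and> card (set t) = r})"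

text \<open>An atom (i, xs): relation symbol i of the language applied to variable tuple xs.\<close>

definition atom_holds :: "relation list \<Rightarrow> ('v \<Rightarrow> nat) \<Rightarrow> nat \<times> 'v list \<Rightarrow> bool" where
  "atom_holds L s a \<longleftrightarrow> fst a < length L \<and> length (snd a) = fst (L ! fst a)
      \<and> map s (snd a) \<in> snd (L ! fst a)"

text \<open>pp-definability over A \<union> B with at most k atoms using relations of B.
  A pp-formula of arity r has free variables 0..r-1, and all other variables are
  existentially quantified; its atoms are A-atoms, B-atoms (at most k occurrences)
  and equality atoms.\<close>

definition pp_le :: "relation list \<Rightarrow> relation list \<Rightarrow> nat \<Rightarrow> relation set" where
  "pp_le A B k = {R. \<exists>(AA :: (nat \<times> nat list) list) (BB :: (nat \<times> nat list) list)
        (EE :: (nat \<times> nat) list).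
      length BB \<le> k \<and>
      snd R = {t. length t = fst R \<and>
        (\<exists>e :: nat \<Rightarrow> nat. (\<forall>i < fst R. e i = t ! i) \<and>
           (\<forall>a\<in>set AA. atom_holds A e a) \<and>
           (\<forall>a\<in>set BB. atom_holds B e a) \<and>
           (\<forall>(u, v)\<in>set EE. e u = e v))}}"

definition csp_instance ::
  "relation list \<Rightarrow> relation list \<Rightarrow> nat \<Rightarrow> 'v set \<Rightarrow> (nat \<times> 'v list) set \<Rightarrow> (nat \<times> 'v list) set \<Rightarrow> bool"
where
  "csp_instance A B k V C1 C2 \<longleftrightarrow> finite V \<and> finite C1 \<and> finite C2 \<and> card C2 \<le> k \<and>
     (\<forall>(i, xs)\<in>C1. i < length A \<and> length xs = fst (A ! i) \<and> set xs \<subseteq> V) \<and>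
     (\<forall>(i, xs)\<in>C2. i < length B \<and> length xs = fst (B ! i) \<and> set xs \<subseteq> V)"

definition csp_solution ::
  "relation list \<Rightarrow> relation list \<Rightarrow> (nat \<times> 'v list) set \<Rightarrow> (nat \<times> 'v list) set \<Rightarrow> ('v \<Rightarrow> nat) \<Rightarrow> bool"
where
  "csp_solution A B C1 C2 s \<longleftrightarrow> (\<forall>a\<in>C1. atom_holds A s a) \<and> (\<forall>a\<in>C2. atom_holds B s a)"

end

theory Submission
  imports Defs "HOL-Combinatorics.Transposition"
begin

text \<open>Relations definable in \<open>(\<nat>; =)\<close> are invariant under bijections of \<open>\<nat>\<close>, so
  composing a solution with a bijection yields a solution. Take a solution \<open>s\<close> using the
  fewest values \<open>m\<close> on \<open>V\<close>. If \<open>m \<le> c\<close>, a bijection moves these values into \<open>{1..c}\<close>.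
  Otherwise rename them to \<open>0, \<dots>, m - 1\<close> and read the instance as a pp-formula whose free
  variables are the first \<open>c + 1\<close> values: by minimality every solution is injective on them,
  and by bijection invariance every injective tuple occurs, so the formula defines
  \<open>\<noteq>\<^sub>c\<^sub>+\<^sub>1\<close> with at most \<open>k\<close> atoms over \<open>B\<close>.\<close>

lemma fo_sat_cong:
  "(\<forall>i\<in>fo_fv \<phi>. s i = s' i) \<Longrightarrow> fo_sat \<phi> s = fo_sat \<phi> s'"
proof (induction \<phi> arbitrary: s s')
  case (FEx x f)
  have "fo_sat f (s(x := a)) = fo_sat f (s'(x := a))" for a
    using FEx.IH FEx.prems by auto
  then show ?case by simp
next
  case (FConj f g)
  then show ?case by (metis UnCI fo_fv.simps(3) fo_sat.simps(3))
next
  case (FDisj f g)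
  then show ?case by (metis UnCI fo_fv.simps(4) fo_sat.simps(4))
qed auto

lemma fo_sat_comp_bij:
  assumes "bij \<pi>"
  shows "fo_sat \<phi> (\<pi> \<circ> s) = fo_sat \<phi> s"
proof (induction \<phi> arbitrary: s)
  case (FEq i j)
  then show ?case using assms by (simp add: bij_def inj_eq)
next
  case (FEx x f)
  have upd: "(\<pi> \<circ> s)(x := a) = \<pi> \<circ> (s(x := inv \<pi> a))" for a
    using assms by (auto simp: bij_def surj_f_inv_f)
  have "fo_sat (FEx x f) (\<pi> \<circ> s) = (\<exists>a. fo_sat f (s(x := inv \<pi> a)))"
    using FEx.IH by (simp only: fo_sat.simps upd)
  also have "\<dots> = (\<exists>b. fo_sat f (s(x := b)))"
    using assms by (metis bij_def inv_f_f)
  finally show ?case by (simp only: fo_sat.simps)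
qed auto

lemma fo_definable_map_bij:
  assumes "fo_definable R" "bij \<pi>" "t \<in> snd R"
  shows "map \<pi> t \<in> snd R"
proof -
  obtain \<phi> where fv: "fo_fv \<phi> \<subseteq> {..<fst R}"
    and R: "snd R = {t. length t = fst R \<and> fo_sat \<phi> (\<lambda>i. t ! i)}"
    using assms(1) unfolding fo_definable_def by blast
  have len: "length t = fst R" and sat: "fo_sat \<phi> (\<lambda>i. t ! i)"
    using assms(3) R by auto
  have "fo_sat \<phi> (\<lambda>i. map \<pi> t ! i) = fo_sat \<phi> (\<pi> \<circ> (\<lambda>i. t ! i))"
    by (rule fo_sat_cong) (use fv len in auto)
  also have "\<dots>"
    using sat fo_sat_comp_bij[OF assms(2)] by simp
  finally show ?thesis
    using R len by simp
qed

lemma atom_holds_comp_bij: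
  assumes "equality_language L" "bij \<pi>" "atom_holds L s a"
  shows "atom_holds L (\<pi> \<circ> s) a"
proof -
  have "fo_definable (L ! fst a)"
    using assms(1,3) unfolding equality_language_def atom_holds_def by auto
  then show ?thesis
    using assms(3) fo_definable_map_bij[OF _ assms(2)]
    unfolding atom_holds_def by (simp flip: map_map)
qed

lemma csp_solution_comp_bij:
  assumes "equality_language A" "equality_language B" "bij \<pi>" "csp_solution A B C1 C2 s"
  shows "csp_solution A B C1 C2 (\<pi> \<circ> s)"
  using assms atom_holds_comp_bij unfolding csp_solution_def by blast

lemma ex_bij_map_distinct:
  fixes xs ys :: "'a list"
  assumes "distinct xs" "distinct ys" "length xs = length ys"
  shows "\<exists>\<pi>. bij \<pi> \<and> map \<pi> xs = ys"
  using assms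
proof (induction xs arbitrary: ys)
  case Nil
  then show ?case by (auto intro: bij_id)
next
  case (Cons x xs)
  then obtain y ys' where ys: "ys = y # ys'"
    by (cases ys) auto
  with Cons obtain \<pi> where "bij \<pi>" and \<pi>: "map \<pi> xs = ys'"
    by auto
  define \<sigma> where "\<sigma> = transpose (\<pi> x) y \<circ> \<pi>"
  have "bij \<sigma>"
    unfolding \<sigma>_def using \<open>bij \<pi>\<close> by (simp add: bij_comp)
  moreover have "\<sigma> z = \<pi> z" if "z \<in> set xs" for z
  proof -
    have "\<pi> z \<noteq> y"
      using \<pi> that Cons.prems ys by auto
    moreover have "\<pi> z \<noteq> \<pi> x"
      using Cons.prems(1) that \<open>bij \<pi>\<close> by (auto simp: bij_def inj_eq)
    ultimately show ?thesis
      by (simp add: \<sigma>_def)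
  qed
  then have "map \<sigma> xs = ys'"
    using \<pi> by (metis map_eq_conv)
  ultimately show ?case
    using ys by (auto simp: \<sigma>_def)
qed

lemma ex_bij_image_interval:
  fixes X :: "nat set"
  assumes "finite X"
  shows "\<exists>\<pi>. bij \<pi> \<and> \<pi> ` X = {a..<a + card X}"
proof -
  obtain \<pi> where "bij \<pi>" and \<pi>: "map \<pi> (sorted_list_of_set X) = [a..<a + card X]"
    using ex_bij_map_distinct[of "sorted_list_of_set X" "[a..<a + card X]"] assms by auto
  then have "\<pi> ` X = set [a..<a + card X]"
    using assms by (metis set_map set_sorted_list_of_set)
  then show ?thesis
    using \<open>bij \<pi>\<close> by auto
qed

lemma csp_solution_image_interval:
  assumes "equality_language A" "equality_language B" "csp_solution A B C1 C2 s" "finite V"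
  shows "\<exists>s'. csp_solution A B C1 C2 s' \<and> s' ` V = {a..<a + card (s ` V)}"
proof -
  obtain \<pi> where "bij \<pi>" and \<pi>: "\<pi> ` s ` V = {a..<a + card (s ` V)}"
    using ex_bij_image_interval[of "s ` V" a] assms(4) by auto
  have "csp_solution A B C1 C2 (\<pi> \<circ> s)"
    using csp_solution_comp_bij[OF assms(1,2) \<open>bij \<pi>\<close> assms(3)] .
  moreover have "(\<pi> \<circ> s) ` V = {a..<a + card (s ` V)}"
    unfolding image_comp[symmetric] by (fact \<pi>)
  ultimately show ?thesis
    by blast
qed

lemma atom_holds_map_vars:
  "atom_holds L e (i, map \<rho> xs) = atom_holds L (e \<circ> \<rho>) (i, xs)"
  unfolding atom_holds_def by simp

definition solution_projection ::
  "relation list \<Rightarrow> relation list \<Rightarrow> (nat \<times> 'v list) set \<Rightarrow> (nat \<times> 'v list) set \<Rightarrow>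
    ('v \<Rightarrow> nat) \<Rightarrow> nat \<Rightarrow> relation"
where
  "solution_projection A B C1 C2 \<rho> r =
    (r, {t. length t = r \<and> (\<exists>e. (\<forall>i < r. e i = t ! i) \<and> csp_solution A B C1 C2 (e \<circ> \<rho>))})"

lemma solution_projection_in_pp_le:
  fixes \<rho> :: "'v \<Rightarrow> nat"
  assumes "finite C1" "finite C2" "card C2 \<le> k"
  shows "solution_projection A B C1 C2 \<rho> r \<in> pp_le A B k"
proof -
  obtain l1 where l1: "set l1 = C1"
    using assms(1) finite_list by blast
  obtain l2 where l2: "set l2 = C2" "distinct l2"
    using assms(2) finite_distinct_list by blast
  define rename :: "nat \<times> 'v list \<Rightarrow> nat \<times> nat list" where
    "rename = (\<lambda>(i, xs). (i, map \<rho> xs))"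
  define R where "R = solution_projection A B C1 C2 \<rho> r"
  have "csp_solution A B C1 C2 (e \<circ> \<rho>) \<longleftrightarrow>
      (\<forall>a\<in>set (map rename l1). atom_holds A e a) \<and> (\<forall>a\<in>set (map rename l2). atom_holds B e a)"
    for e
    using l1 l2 by (auto simp: csp_solution_def rename_def atom_holds_map_vars)
  then have "snd R = {t. length t = fst R \<and>
      (\<exists>e. (\<forall>i < fst R. e i = t ! i) \<and>
        (\<forall>a\<in>set (map rename l1). atom_holds A e a) \<and>
        (\<forall>a\<in>set (map rename l2). atom_holds B e a) \<and>
        (\<forall>(u, v)\<in>set ([] :: (nat \<times> nat) list). e u = e v))}"
    by (simp add: R_def solution_projection_def)
  moreover have "length (map rename l2) \<le> k"
    using l2 assms(3) by (metis distinct_card length_map)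
  ultimately show ?thesis
    unfolding R_def[symmetric] pp_le_def by blast
qed

lemma neq_rel_eq_solution_projection:
  assumes "equality_language A" "equality_language B"
    and sol: "csp_solution A B C1 C2 \<rho>" and \<rho>: "\<rho> ` V = {0..<m}" and "r \<le> m"
    and least: "\<And>s. csp_solution A B C1 C2 s \<Longrightarrow> m \<le> card (s ` V)"
  shows "neq_rel r = solution_projection A B C1 C2 \<rho> r"
proof -
  have "distinct t" if "length t = r" "\<forall>i < r. e i = t ! i" "csp_solution A B C1 C2 (e \<circ> \<rho>)"
    for t e
  proof -
    have "(e \<circ> \<rho>) ` V = e ` {0..<m}"
      using \<rho> by (metis image_comp)
    then have "m \<le> card (e ` {0..<m})"
      using least[OF that(3)] by simp
    then have "inj_on e {0..<m}"
      using card_image_le[of "{0..<m}" e] by (intro eq_card_imp_inj_on) auto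
    moreover have "t = map e [0..<r]"
      using that(1,2) by (intro nth_equalityI) auto
    ultimately show ?thesis
      using \<open>r \<le> m\<close> by (simp add: distinct_map inj_on_subset)
  qed
  moreover have "\<exists>e. (\<forall>i < r. e i = t ! i) \<and> csp_solution A B C1 C2 (e \<circ> \<rho>)"
    if len: "length t = r" and dist: "distinct t" for t
  proof -
    have "length [0..<r] = length t"
      using len by simp
    then obtain \<sigma> where "bij \<sigma>" "map \<sigma> [0..<r] = t"
      using ex_bij_map_distinct[OF distinct_upt dist] by blast
    then show ?thesis
      using csp_solution_comp_bij[OF assms(1,2) _ sol] by (intro exI[of _ \<sigma>]) auto
  qed
  ultimately show ?thesis
    unfolding neq_rel_def solution_projection_def by (auto simp: distinct_card card_distinct)
qed

theorem lemma23:
  fixes A B :: "relation list" and c k :: nat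
    and V :: "'v set" and C1 C2 :: "(nat \<times> 'v list) set"
  assumes "equality_language A" and "equality_language B" and "c \<ge> 1"
    and "neq_rel (c + 1) \<notin> pp_le A B k"
    and "csp_instance A B k V C1 C2"
    and "\<exists>s. csp_solution A B C1 C2 s"
  shows "\<exists>s. csp_solution A B C1 C2 s \<and> s ` V \<subseteq> {1..c}"
proof -
  obtain s where sol: "csp_solution A B C1 C2 s"
    and least: "\<And>s'. csp_solution A B C1 C2 s' \<Longrightarrow> card (s ` V) \<le> card (s' ` V)"
    using assms(6) ex_has_least_nat[where m = "\<lambda>s. card (s ` V)"] by metis
  have "finite V" "finite C1" "finite C2" "card C2 \<le> k"
    using assms(5) unfolding csp_instance_def by auto
  show ?thesis
  proof (cases "card (s ` V) \<le> c")
    case True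
    obtain s' where "csp_solution A B C1 C2 s'" "s' ` V = {1..<1 + card (s ` V)}"
      using csp_solution_image_interval[OF assms(1,2) sol \<open>finite V\<close>] by blast
    with True show ?thesis
      by (intro exI[of _ s']) auto
  next
    case False
    obtain \<rho> where "csp_solution A B C1 C2 \<rho>" "\<rho> ` V = {0..<card (s ` V)}"
      using csp_solution_image_interval[OF assms(1,2) sol \<open>finite V\<close>, of 0] by auto
    moreover have "c + 1 \<le> card (s ` V)"
      using False by simp
    ultimately have "neq_rel (c + 1) = solution_projection A B C1 C2 \<rho> (c + 1)"
      using least by (rule neq_rel_eq_solution_projection[OF assms(1,2)])
    moreover have "solution_projection A B C1 C2 \<rho> (c + 1) \<in> pp_le A B k"
      using \<open>finite C1\<close> \<open>finite C2\<close> \<open>card C2 \<le> k\<close> by (rule solution_projection_in_pp_le)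
    ultimately show ?thesis
      using assms(4) by simp
  qed
qed

end
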